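(* Let $s\in\{1,\ldots,d\}$, $M\in\mathbb{R}^{\mathcal{I}}$, $P\subset\mathcal{I}$, $\alpha\in\mathbb{R}$. Let $G^-$ and $G$ be TT representations with the same ranks, where $G_1,\ldots,G_{s-1}$ are left orthogonal and $G_{s+1},\ldots,G_d$ are right orthogonal. Define $Z\in\mathbb{R}^{\mathcal{I}}$ by $Z_i:=M_i$ for $i\in P$ and $Z_i:=A^{G^-}_i$ for $i\in\mathcal{I}\setminus P$, and $Z^\alpha:=\alpha Z+(1-\alpha)A^{G^-}$. Then the minimizer of $\|Z^\alpha-A^{\tilde G}\|_F$ over $\tilde G_s$, where $\tilde G_\nu:=G_\nu$ for $\nu\neq s$ (the update block with overrelaxation parameter $\alpha$), is the block $G_s^{new}$ given for all $j\in\mathcal{I}_s$ by \[ G_s^{new}(j) = (G^{<s})^T (G^-)^{<s}\, G^{-}_s(j)\, (G^-)^{>s} (G^{>s})^T + \sum_{i \in P,\, i_s = j} \alpha\, (M_i - A^{G^{-}}_i)\, (G_1(i_1)\cdots G_{s-1}(i_{s-1}))^T\, (G_{s+1}(i_{s+1})\cdots G_d(i_d))^T. \]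
   Context: Let $\mathcal{I}_\mu=\{1,\ldots,n_\mu\}$, $\mathcal{I}=\mathcal{I}_1\times\cdots\times\mathcal{I}_d$. A TT representation with ranks $r_0=1,r_1,\ldots,r_{d-1},r_d=1$ consists of maps $G_\mu:\mathcal{I}_\mu\to\mathbb{R}^{r_{\mu-1}\times r_\mu}$; it represents $A^G_{i_1,\ldots,i_d}=G_1(i_1)\cdots G_d(i_d)$. $\|\cdot\|_F$ is the Euclidean norm of all entries. $G_\mu$ is left orthogonal if $\sum_{i}G_\mu(i)^TG_\mu(i)=I$, right orthogonal if $\sum_i G_\mu(i)G_\mu(i)^T=I$. For a representation $H$, $H^{<s}$ is the matrix with rows indexed by $(i_1,\ldots,i_{s-1})$, row $(i_1,\ldots,i_{s-1})$ being $H_1(i_1)\cdots H_{s-1}(i_{s-1})\in\mathbb{R}^{1\times r_{s-1}}$ (the $1\times1$ identity if $s=1$), and $H^{>s}$ is the matrix with columns indexed by $(i_{s+1},\ldots,i_d)$, column $(i_{s+1},\ldots,i_d)$ being $H_{s+1}(i_{s+1})\cdots H_d(i_d)\in\mathbb{R}^{r_s\times1}$ (the $1\times1$ identity if $s=d$). *)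

theory Defs
  imports "Jordan_Normal_Form.Matrix"
begin

text \<open>A multi-index is a function i :: nat => nat, where i mu (1 <= mu <= d) is the mu-th index,
  ranging over {1..n mu}.\<close>

definition tt_index_set :: "nat \<Rightarrow> (nat \<Rightarrow> nat) \<Rightarrow> (nat \<Rightarrow> nat) set" where
  "tt_index_set d n = PiE {1..d} (\<lambda>mu. {1..n mu})"

definition is_tt_rep :: "nat \<Rightarrow> (nat \<Rightarrow> nat) \<Rightarrow> (nat \<Rightarrow> nat) \<Rightarrow> (nat \<Rightarrow> nat \<Rightarrow> real mat) \<Rightarrow> bool" where
  "is_tt_rep d n r G \<longleftrightarrow> r 0 = 1 \<and> r d = 1 \<and>
     (\<forall>mu\<in>{1..d}. \<forall>j\<in>{1..n mu}. G mu j \<in> carrier_mat (r (mu - 1)) (r mu))"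

definition msum :: "nat \<Rightarrow> nat \<Rightarrow> ('b \<Rightarrow> real mat) \<Rightarrow> 'b set \<Rightarrow> real mat" where
  "msum nr nc f S = mat nr nc (\<lambda>(a,b). \<Sum>x\<in>S. f x $$ (a,b))"

definition left_orth :: "(nat \<Rightarrow> nat) \<Rightarrow> (nat \<Rightarrow> nat) \<Rightarrow> (nat \<Rightarrow> nat \<Rightarrow> real mat) \<Rightarrow> nat \<Rightarrow> bool" where
  "left_orth n r G mu \<longleftrightarrow>
     msum (r mu) (r mu) (\<lambda>j. (G mu j)\<^sup>T * G mu j) {1..n mu} = 1\<^sub>m (r mu)"

definition right_orth :: "(nat \<Rightarrow> nat) \<Rightarrow> (nat \<Rightarrow> nat) \<Rightarrow> (nat \<Rightarrow> nat \<Rightarrow> real mat) \<Rightarrow> nat \<Rightarrow> bool" where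
  "right_orth n r G mu \<longleftrightarrow>
     msum (r (mu - 1)) (r (mu - 1)) (\<lambda>j. G mu j * (G mu j)\<^sup>T) {1..n mu} = 1\<^sub>m (r (mu - 1))"

fun left_prod :: "(nat \<Rightarrow> nat \<Rightarrow> real mat) \<Rightarrow> (nat \<Rightarrow> nat) \<Rightarrow> nat \<Rightarrow> real mat" where
  "left_prod G i 0 = 1\<^sub>m 1"
| "left_prod G i (Suc k) = left_prod G i k * G (Suc k) (i (Suc k))"

text \<open>Auxiliary: right_prod_aux G d i m = G_{d-m+1}(i_{d-m+1}) ... G_d(i_d).\<close>
fun right_prod_aux :: "(nat \<Rightarrow> nat \<Rightarrow> real mat) \<Rightarrow> nat \<Rightarrow> (nat \<Rightarrow> nat) \<Rightarrow> nat \<Rightarrow> real mat" where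
  "right_prod_aux G d i 0 = 1\<^sub>m 1"
| "right_prod_aux G d i (Suc m) = G (d - m) (i (d - m)) * right_prod_aux G d i m"

definition right_prod :: "(nat \<Rightarrow> nat \<Rightarrow> real mat) \<Rightarrow> nat \<Rightarrow> (nat \<Rightarrow> nat) \<Rightarrow> nat \<Rightarrow> real mat" where
  "right_prod G d i k = right_prod_aux G d i (d - k)"

definition tt_tensor :: "nat \<Rightarrow> (nat \<Rightarrow> nat \<Rightarrow> real mat) \<Rightarrow> (nat \<Rightarrow> nat) \<Rightarrow> real" where
  "tt_tensor d G i = left_prod G i d $$ (0, 0)"

definition frob_norm :: "nat \<Rightarrow> (nat \<Rightarrow> nat) \<Rightarrow> ((nat \<Rightarrow> nat) \<Rightarrow> real) \<Rightarrow> real" where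
  "frob_norm d n X = sqrt (\<Sum>i\<in>tt_index_set d n. (X i)\<^sup>2)"

text \<open>(H^{<s})^T K^{<s}: sum over the row multi-indices (i_1,...,i_{s-1}).\<close>
definition left_gram :: "(nat \<Rightarrow> nat) \<Rightarrow> (nat \<Rightarrow> nat) \<Rightarrow> (nat \<Rightarrow> nat \<Rightarrow> real mat) \<Rightarrow> (nat \<Rightarrow> nat \<Rightarrow> real mat) \<Rightarrow> nat \<Rightarrow> real mat" where
  "left_gram r n H K s = msum (r (s - 1)) (r (s - 1))
     (\<lambda>l. (left_prod H l (s - 1))\<^sup>T * left_prod K l (s - 1)) (PiE {1..s - 1} (\<lambda>mu. {1..n mu}))"

text \<open>K^{>s} (H^{>s})^T: sum over the column multi-indices (i_{s+1},...,i_d).\<close>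
definition right_gram :: "nat \<Rightarrow> (nat \<Rightarrow> nat) \<Rightarrow> (nat \<Rightarrow> nat) \<Rightarrow> (nat \<Rightarrow> nat \<Rightarrow> real mat) \<Rightarrow> (nat \<Rightarrow> nat \<Rightarrow> real mat) \<Rightarrow> nat \<Rightarrow> real mat" where
  "right_gram d n r K H s = msum (r s) (r s)
     (\<lambda>l. right_prod K d l s * (right_prod H d l s)\<^sup>T) (PiE {s + 1..d} (\<lambda>mu. {1..n mu}))"

end

theory Submission
  imports Defs
begin

text \<open>Replacing the s-th core of G by H gives a tensor A(H) that is linear in H. Its adjoint maps a
  tensor c to the cores j |-> sum over i with i_s = j of c_i (G^{<s}_i)^T (G^{>s}_i)^T, so the adjoint
  after A is H |-> (G^{<s})^T G^{<s} H G^{>s} (G^{>s})^T. Left orthogonality of G_1, ..., G_{s-1} and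
  right orthogonality of G_{s+1}, ..., G_d make both Gram matrices identities (peel off one core at a
  time), so A is an isometry and the adjoint image H0 of any tensor Y solves the normal equations.
  Hence |Y - A(H)|^2 = |Y - A(H0)|^2 + |H - H0|^2, which gives minimality and uniqueness of H0.
  For Y = Z^alpha = A^{G-} + alpha (M - A^{G-}) on P, the adjoint of A^{G-} is the Gram sandwich of
  G-_s, and the adjoint of the correction is the sum over P in the formula for G_s^new.\<close>

lemma index_mult_mat_sum:
  assumes "A \<in> carrier_mat n1 n2" "B \<in> carrier_mat n2 n3" "i < n1" "j < n3"
  shows "(A * B) $$ (i,j) = (\<Sum>k<n2. A $$ (i,k) * B $$ (k,j))"
  using assms by (auto simp: scalar_prod_def lessThan_atLeast0)

lemma index_mult_mat3_sum:
  assumes A: "A \<in> carrier_mat n1 n2" and B: "B \<in> carrier_mat n2 n3" and C: "C \<in> carrier_mat n3 n4"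
    and "i < n1" "j < n4"
  shows "(A * B * C) $$ (i, j) = (\<Sum>k<n2. \<Sum>l<n3. A $$ (i, k) * B $$ (k, l) * C $$ (l, j))"
proof -
  have "(A * B * C) $$ (i, j) = (\<Sum>l<n3. (A * B) $$ (i, l) * C $$ (l, j))"
    using index_mult_mat_sum[OF mult_carrier_mat[OF A B] C] assms(4,5) .
  also have "\<dots> = (\<Sum>l<n3. \<Sum>k<n2. A $$ (i, k) * B $$ (k, l) * C $$ (l, j))"
    using index_mult_mat_sum[OF A B \<open>i < n1\<close>] by (simp add: sum_distrib_right)
  finally show ?thesis by (simp add: sum.swap[of _ "{..<n3}"])
qed

lemma index_transpose_mult_rows:
  assumes "u \<in> carrier_mat 1 m" "v \<in> carrier_mat 1 m'" "a < m" "b < m'"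
  shows "(u\<^sup>T * v) $$ (a, b) = u $$ (0, a) * v $$ (0, b)"
  using index_mult_mat_sum[of "u\<^sup>T" m 1 v m' a b] assms by simp

lemma index_mult_transpose_cols:
  assumes "u \<in> carrier_mat m 1" "v \<in> carrier_mat m' 1" "a < m" "b < m'"
  shows "(u * v\<^sup>T) $$ (a, b) = u $$ (a, 0) * v $$ (b, 0)"
  using index_mult_mat_sum[of u m 1 "v\<^sup>T" m' a b] assms by simp

lemma msum_carrier [simp]: "msum nr nc f S \<in> carrier_mat nr nc"
  by (simp add: msum_def)

lemma dim_msum [simp]:
  "dim_row (msum nr nc f S) = nr" "dim_col (msum nr nc f S) = nc"
  by (simp_all add: msum_def)

lemma index_msum [simp]: "a < nr \<Longrightarrow> b < nc \<Longrightarrow> msum nr nc f S $$ (a,b) = (\<Sum>x\<in>S. f x $$ (a,b))"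
  by (simp add: msum_def)

lemma msum_cong: "(\<And>x. x \<in> S \<Longrightarrow> f x = g x) \<Longrightarrow> msum nr nc f S = msum nr nc g S"
  unfolding msum_def by (metis (no_types, lifting) sum.cong)

lemma mult_msum_left:
  assumes "A \<in> carrier_mat m nr" "\<And>x. x \<in> S \<Longrightarrow> f x \<in> carrier_mat nr nc"
  shows "A * msum nr nc f S = msum m nc (\<lambda>x. A * f x) S"
proof (rule eq_matI)
  fix a b assume "a < dim_row (msum m nc (\<lambda>x. A * f x) S)" "b < dim_col (msum m nc (\<lambda>x. A * f x) S)"
  then have ab: "a < m" "b < nc" by auto
  have "(A * msum nr nc f S) $$ (a,b) = (\<Sum>k<nr. A $$ (a,k) * (\<Sum>x\<in>S. f x $$ (k,b)))"
    using ab by (simp add: index_mult_mat_sum[OF assms(1) msum_carrier ab])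
  also have "\<dots> = (\<Sum>x\<in>S. \<Sum>k<nr. A $$ (a,k) * f x $$ (k,b))"
    by (simp add: sum_distrib_left sum.swap[of _ S])
  also have "\<dots> = (\<Sum>x\<in>S. (A * f x) $$ (a,b))"
    using assms ab by (intro sum.cong refl) (simp add: index_mult_mat_sum[of _ m nr _ nc])
  finally show "(A * msum nr nc f S) $$ (a,b) = msum m nc (\<lambda>x. A * f x) S $$ (a,b)"
    using ab by simp
qed (use assms in auto)

lemma mult_msum_right:
  assumes "B \<in> carrier_mat nc m" "\<And>x. x \<in> S \<Longrightarrow> f x \<in> carrier_mat nr nc"
  shows "msum nr nc f S * B = msum nr m (\<lambda>x. f x * B) S"
proof (rule eq_matI)
  fix a b assume "a < dim_row (msum nr m (\<lambda>x. f x * B) S)" "b < dim_col (msum nr m (\<lambda>x. f x * B) S)"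
  then have ab: "a < nr" "b < m" by auto
  have "(msum nr nc f S * B) $$ (a,b) = (\<Sum>k<nc. (\<Sum>x\<in>S. f x $$ (a,k)) * B $$ (k,b))"
    using ab by (simp add: index_mult_mat_sum[OF msum_carrier assms(1) ab])
  also have "\<dots> = (\<Sum>x\<in>S. \<Sum>k<nc. f x $$ (a,k) * B $$ (k,b))"
    by (simp add: sum_distrib_right sum.swap[of _ S])
  also have "\<dots> = (\<Sum>x\<in>S. (f x * B) $$ (a,b))"
    using assms ab by (intro sum.cong refl) (simp add: index_mult_mat_sum[of _ nr nc _ m])
  finally show "(msum nr nc f S * B) $$ (a,b) = msum nr m (\<lambda>x. f x * B) S $$ (a,b)"
    using ab by simp
qed (use assms in auto)

lemma transpose_mult_self_mult:
  fixes A B :: "'a::comm_semiring_1 mat"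
  assumes "A \<in> carrier_mat m k" "B \<in> carrier_mat k l"
  shows "(A * B)\<^sup>T * (A * B) = B\<^sup>T * (A\<^sup>T * A) * B"
proof -
  have "(A * B)\<^sup>T * (A * B) = B\<^sup>T * (A\<^sup>T * (A * B))"
    unfolding transpose_mult[OF assms] using assms by (intro assoc_mult_mat[of _ l k _ m _ l]) auto
  also have "\<dots> = B\<^sup>T * (A\<^sup>T * A * B)"
    using assms by (simp add: assoc_mult_mat[of _ k m _ k])
  also have "\<dots> = B\<^sup>T * (A\<^sup>T * A) * B"
    using assms by (simp add: assoc_mult_mat[of _ l k _ k])
  finally show ?thesis .
qed

lemma mult_self_transpose_mult:
  fixes A B :: "'a::comm_semiring_1 mat"
  assumes "A \<in> carrier_mat m k" "B \<in> carrier_mat k l"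
  shows "(A * B) * (A * B)\<^sup>T = A * (B * B\<^sup>T) * A\<^sup>T"
proof -
  have "(A * B) * (A * B)\<^sup>T = A * (B * (B\<^sup>T * A\<^sup>T))"
    unfolding transpose_mult[OF assms] using assms by (intro assoc_mult_mat[of _ m k _ l _ m]) auto
  also have "\<dots> = A * (B * B\<^sup>T * A\<^sup>T)"
    using assms by (simp add: assoc_mult_mat[of _ k l _ k])
  also have "\<dots> = A * (B * B\<^sup>T) * A\<^sup>T"
    using assms by (simp add: assoc_mult_mat[of _ m k _ k])
  finally show ?thesis .
qed

lemma msum_sandwich:
  assumes "A \<in> carrier_mat m nr" "B \<in> carrier_mat nc m'" "\<And>x. x \<in> S \<Longrightarrow> f x \<in> carrier_mat nr nc"
  shows "msum m m' (\<lambda>x. A * f x * B) S = A * msum nr nc f S * B"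
proof -
  have "msum m m' (\<lambda>x. A * f x * B) S = msum m nc (\<lambda>x. A * f x) S * B"
    using assms by (intro mult_msum_right[symmetric]) auto
  also have "\<dots> = A * msum nr nc f S * B"
    using assms by (simp add: mult_msum_left)
  finally show ?thesis .
qed

lemma sum_PiE_insert:
  assumes "x \<notin> S"
  shows "(\<Sum>f\<in>PiE (insert x S) T. h f) = (\<Sum>y\<in>T x. \<Sum>g\<in>PiE S T. h (g(x := y)))"
proof -
  have "(\<Sum>f\<in>PiE (insert x S) T. h f) = (\<Sum>(y,g)\<in>T x \<times> PiE S T. h (g(x := y)))"
    using assms
    by (intro sum.reindex_bij_witness[of _ "\<lambda>(y,g). g(x := y)" "\<lambda>f. (f x, f(x := undefined))"])
       (auto simp: PiE_def extensional_def)
  then show ?thesis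
    by (simp add: sum.cartesian_product)
qed

lemma msum_PiE_insert:
  "x \<notin> S \<Longrightarrow> msum nr nc f (PiE (insert x S) T)
     = msum nr nc (\<lambda>y. msum nr nc (\<lambda>g. f (g(x := y))) (PiE S T)) (T x)"
  by (rule eq_matI) (auto simp: sum_PiE_insert)

lemma tt_index_set_mem: "i \<in> tt_index_set d n \<Longrightarrow> mu \<in> {1..d} \<Longrightarrow> i mu \<in> {1..n mu}"
  unfolding tt_index_set_def using PiE_mem by blast

lemma finite_tt_index_set [simp]: "finite (tt_index_set d n)"
  by (simp add: tt_index_set_def finite_PiE)

lemma is_tt_rep_carrier:
  "is_tt_rep d n r G \<Longrightarrow> mu \<in> {1..d} \<Longrightarrow> j \<in> {1..n mu} \<Longrightarrow> G mu j \<in> carrier_mat (r (mu - 1)) (r mu)"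
  by (simp add: is_tt_rep_def)

lemma is_tt_rep_update:
  assumes "is_tt_rep d n r G" "\<forall>j\<in>{1..n s}. H j \<in> carrier_mat (r (s - 1)) (r s)"
  shows "is_tt_rep d n r (G(s := H))"
  using assms unfolding is_tt_rep_def by auto

lemma left_prod_cong:
  "(\<And>mu. mu \<in> {1..k} \<Longrightarrow> F mu (i mu) = F' mu (i' mu)) \<Longrightarrow> left_prod F i k = left_prod F' i' k"
  by (induction k) auto

lemma right_prod_last [simp]: "right_prod F d i d = 1\<^sub>m 1"
  by (simp add: right_prod_def)

lemma right_prod_step:
  assumes "k < d"
  shows "right_prod F d i k = F (Suc k) (i (Suc k)) * right_prod F d i (Suc k)"
proof -
  from assms have "d - k = Suc (d - Suc k)" "d - (d - Suc k) = Suc k" by simp_all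
  then show ?thesis unfolding right_prod_def by simp
qed

lemma right_prod_cong:
  "k \<le> d \<Longrightarrow> (\<And>mu. mu \<in> {Suc k..d} \<Longrightarrow> F mu (i mu) = F' mu (i' mu))
   \<Longrightarrow> right_prod F d i k = right_prod F' d i' k"
  by (induction k rule: inc_induct) (auto simp: right_prod_step)

lemma left_prod_carrier:
  assumes "is_tt_rep d n r G" "k \<le> d" "\<And>mu. mu \<in> {1..k} \<Longrightarrow> i mu \<in> {1..n mu}"
  shows "left_prod G i k \<in> carrier_mat 1 (r k)"
  using assms(2,3)
proof (induction k)
  case 0
  then show ?case using assms(1) by (simp add: is_tt_rep_def)
next
  case (Suc k)
  have "G (Suc k) (i (Suc k)) \<in> carrier_mat (r k) (r (Suc k))"
    using assms(1) Suc.prems unfolding is_tt_rep_def by force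
  with Suc show ?case by auto
qed

lemma right_prod_carrier:
  assumes "is_tt_rep d n r G" "k \<le> d" "\<And>mu. mu \<in> {Suc k..d} \<Longrightarrow> i mu \<in> {1..n mu}"
  shows "right_prod G d i k \<in> carrier_mat (r k) 1"
  using assms(2,3)
proof (induction k rule: inc_induct)
  case base
  then show ?case using assms(1) by (simp add: is_tt_rep_def)
next
  case (step k)
  have "G (Suc k) (i (Suc k)) \<in> carrier_mat (r k) (r (Suc k))"
    using assms(1) step.prems step.hyps unfolding is_tt_rep_def by force
  with step show ?case by (auto simp: right_prod_step)
qed

lemma left_prod_mult_right_prod:
  assumes G: "is_tt_rep d n r G" and "k \<le> d" and i: "i \<in> tt_index_set d n"
  shows "left_prod G i d = left_prod G i k * right_prod G d i k"
  using assms(2)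
proof (induction k rule: inc_induct)
  case base
  have "left_prod G i d \<in> carrier_mat 1 (r d)"
    using tt_index_set_mem[OF i] by (intro left_prod_carrier[OF G]) auto
  moreover have "r d = 1" using G by (simp add: is_tt_rep_def)
  ultimately show ?case by simp
next
  case (step k)
  have "left_prod G i k \<in> carrier_mat 1 (r k)"
    using step.hyps tt_index_set_mem[OF i] by (intro left_prod_carrier[OF G]) auto
  moreover have "right_prod G d i (Suc k) \<in> carrier_mat (r (Suc k)) 1"
    using step.hyps tt_index_set_mem[OF i] by (intro right_prod_carrier[OF G]) auto
  moreover have "G (Suc k) (i (Suc k)) \<in> carrier_mat (r k) (r (Suc k))"
    using step.hyps G tt_index_set_mem[OF i, of "Suc k"] unfolding is_tt_rep_def by force
  ultimately show ?case using step by (simp add: right_prod_step)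
qed

lemma tt_tensor_block_expansion:
  assumes G: "is_tt_rep d n r G" and s: "s \<in> {1..d}" and i: "i \<in> tt_index_set d n"
  shows "tt_tensor d G i = (\<Sum>a<r (s - 1). \<Sum>b<r s.
     left_prod G i (s - 1) $$ (0, a) * G s (i s) $$ (a, b) * right_prod G d i s $$ (b, 0))"
proof -
  have L: "left_prod G i (s - 1) \<in> carrier_mat 1 (r (s - 1))"
    using s tt_index_set_mem[OF i] by (intro left_prod_carrier[OF G]) auto
  have C: "G s (i s) \<in> carrier_mat (r (s - 1)) (r s)"
    using is_tt_rep_carrier[OF G s tt_index_set_mem[OF i s]] .
  have R: "right_prod G d i s \<in> carrier_mat (r s) 1"
    using s tt_index_set_mem[OF i] by (intro right_prod_carrier[OF G]) auto
  have "left_prod G i s = left_prod G i (s - 1) * G s (i s)"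
    using s left_prod.simps(2)[of G i "s - 1"] by simp
  then have "tt_tensor d G i = (left_prod G i (s - 1) * G s (i s) * right_prod G d i s) $$ (0, 0)"
    unfolding tt_tensor_def using left_prod_mult_right_prod[OF G _ i, of s] s by simp
  also have "\<dots> = (\<Sum>a<r (s - 1). \<Sum>b<r s.
     left_prod G i (s - 1) $$ (0, a) * G s (i s) $$ (a, b) * right_prod G d i s $$ (b, 0))"
    by (rule index_mult_mat3_sum[OF L C R]) simp_all
  finally show ?thesis .
qed

lemma left_gram_self_Suc:
  assumes G: "is_tt_rep d n r G" and k: "k < d"
  shows "left_gram r n G G (Suc (Suc k)) = msum (r (Suc k)) (r (Suc k))
    (\<lambda>y. (G (Suc k) y)\<^sup>T * left_gram r n G G (Suc k) * G (Suc k) y) {1..n (Suc k)}"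
proof -
  define T where "T = (\<lambda>mu::nat. {1..n mu})"
  define L where "L = (\<lambda>g. left_prod G g k)"
  define Gy where "Gy = G (Suc k)"
  have C: "Gy y \<in> carrier_mat (r k) (r (Suc k))" if "y \<in> T (Suc k)" for y
    using is_tt_rep_carrier[OF G, of "Suc k" y] k that by (simp add: T_def Gy_def)
  have L: "L g \<in> carrier_mat 1 (r k)" if "g \<in> PiE {1..k} T" for g
    unfolding L_def
  proof (rule left_prod_carrier[OF G])
    show "k \<le> d" using k by simp
    show "g mu \<in> {1..n mu}" if "mu \<in> {1..k}" for mu
      using PiE_mem[OF \<open>g \<in> PiE {1..k} T\<close> that] by (simp add: T_def)
  qed
  have LL: "(L g)\<^sup>T * L g \<in> carrier_mat (r k) (r k)" if "g \<in> PiE {1..k} T" for g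
    using L[OF that] by auto
  have upd: "left_prod G (g(Suc k := y)) k = L g" for g y
    unfolding L_def by (rule left_prod_cong) auto
  have gram: "left_gram r n G G (Suc k) = msum (r k) (r k) (\<lambda>g. (L g)\<^sup>T * L g) (PiE {1..k} T)"
    unfolding left_gram_def L_def T_def by simp
  have "left_gram r n G G (Suc (Suc k)) = msum (r (Suc k)) (r (Suc k))
      (\<lambda>y. msum (r (Suc k)) (r (Suc k)) (\<lambda>g. (L g * Gy y)\<^sup>T * (L g * Gy y)) (PiE {1..k} T))
      (T (Suc k))"
  proof -
    have "{1..Suc k} = insert (Suc k) {1..k}" by auto
    then show ?thesis
      unfolding left_gram_def T_def Gy_def by (simp add: msum_PiE_insert upd)
  qed
  also have "\<dots> = msum (r (Suc k)) (r (Suc k))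
      (\<lambda>y. (Gy y)\<^sup>T * left_gram r n G G (Suc k) * Gy y) (T (Suc k))"
  proof (rule msum_cong)
    fix y assume y: "y \<in> T (Suc k)"
    have "msum (r (Suc k)) (r (Suc k)) (\<lambda>g. (L g * Gy y)\<^sup>T * (L g * Gy y)) (PiE {1..k} T)
        = msum (r (Suc k)) (r (Suc k)) (\<lambda>g. (Gy y)\<^sup>T * ((L g)\<^sup>T * L g) * Gy y) (PiE {1..k} T)"
      by (rule msum_cong, rule transpose_mult_self_mult[OF L C[OF y]])
    also have "\<dots> = (Gy y)\<^sup>T * left_gram r n G G (Suc k) * Gy y"
      unfolding gram by (rule msum_sandwich[where nr="r k" and nc="r k"]) (use C[OF y] LL in auto)
    finally show "msum (r (Suc k)) (r (Suc k)) (\<lambda>g. (L g * Gy y)\<^sup>T * (L g * Gy y)) (PiE {1..k} T)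
      = (Gy y)\<^sup>T * left_gram r n G G (Suc k) * Gy y" .
  qed
  finally show ?thesis unfolding T_def Gy_def .
qed

lemma left_gram_self_eq_one:
  assumes G: "is_tt_rep d n r G" and "k < d" and "\<forall>mu\<in>{1..k}. left_orth n r G mu"
  shows "left_gram r n G G (Suc k) = 1\<^sub>m (r k)"
  using assms(2,3)
proof (induction k)
  case 0
  have "r 0 = 1" using G by (simp add: is_tt_rep_def)
  then have "left_gram r n G G (Suc 0) = msum 1 1 (\<lambda>l. 1\<^sub>m 1) {\<lambda>x::nat. undefined::nat}"
    unfolding left_gram_def by simp
  also have "\<dots> = 1\<^sub>m 1" by (rule eq_matI) auto
  finally show ?case using \<open>r 0 = 1\<close> by simp
next
  case (Suc k)
  have "left_gram r n G G (Suc (Suc k)) = msum (r (Suc k)) (r (Suc k))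
      (\<lambda>y. (G (Suc k) y)\<^sup>T * 1\<^sub>m (r k) * G (Suc k) y) {1..n (Suc k)}"
    using left_gram_self_Suc[OF G, of k] Suc by simp
  also have "\<dots> = msum (r (Suc k)) (r (Suc k)) (\<lambda>y. (G (Suc k) y)\<^sup>T * G (Suc k) y) {1..n (Suc k)}"
  proof (rule msum_cong)
    fix y assume "y \<in> {1..n (Suc k)}"
    then have "(G (Suc k) y)\<^sup>T \<in> carrier_mat (r (Suc k)) (r k)"
      using is_tt_rep_carrier[OF G, of "Suc k" y] Suc.prems by simp
    then show "(G (Suc k) y)\<^sup>T * 1\<^sub>m (r k) * G (Suc k) y = (G (Suc k) y)\<^sup>T * G (Suc k) y"
      by (simp add: right_mult_one_mat)
  qed
  also have "\<dots> = 1\<^sub>m (r (Suc k))"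
    using Suc.prems unfolding left_orth_def by simp
  finally show ?case .
qed

lemma right_gram_self_step:
  assumes G: "is_tt_rep d n r G" and k: "k < d"
  shows "right_gram d n r G G k = msum (r k) (r k)
    (\<lambda>y. G (Suc k) y * right_gram d n r G G (Suc k) * (G (Suc k) y)\<^sup>T) {1..n (Suc k)}"
proof -
  define T where "T = (\<lambda>mu::nat. {1..n mu})"
  define R where "R = (\<lambda>g. right_prod G d g (Suc k))"
  define Gy where "Gy = G (Suc k)"
  have C: "Gy y \<in> carrier_mat (r k) (r (Suc k))" if "y \<in> T (Suc k)" for y
    using is_tt_rep_carrier[OF G, of "Suc k" y] k that by (simp add: T_def Gy_def)
  have R: "R g \<in> carrier_mat (r (Suc k)) 1" if "g \<in> PiE {Suc (Suc k)..d} T" for g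
    unfolding R_def
  proof (rule right_prod_carrier[OF G])
    show "Suc k \<le> d" using k by simp
    show "g mu \<in> {1..n mu}" if "mu \<in> {Suc (Suc k)..d}" for mu
      using PiE_mem[OF \<open>g \<in> PiE {Suc (Suc k)..d} T\<close> that] by (simp add: T_def)
  qed
  have RR: "R g * (R g)\<^sup>T \<in> carrier_mat (r (Suc k)) (r (Suc k))" if "g \<in> PiE {Suc (Suc k)..d} T" for g
    using R[OF that] by auto
  have upd: "right_prod G d (g(Suc k := y)) k = Gy y * R g" for g y
  proof -
    have "right_prod G d (g(Suc k := y)) (Suc k) = R g"
      unfolding R_def using k by (intro right_prod_cong) auto
    then show ?thesis using right_prod_step[OF k] by (simp add: Gy_def)
  qed
  have gram: "right_gram d n r G G (Suc k) = msum (r (Suc k)) (r (Suc k))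
      (\<lambda>g. R g * (R g)\<^sup>T) (PiE {Suc (Suc k)..d} T)"
    unfolding right_gram_def R_def T_def by simp
  have "right_gram d n r G G k = msum (r k) (r k)
      (\<lambda>y. msum (r k) (r k) (\<lambda>g. (Gy y * R g) * (Gy y * R g)\<^sup>T) (PiE {Suc (Suc k)..d} T))
      (T (Suc k))"
  proof -
    have "{Suc k..d} = insert (Suc k) {Suc (Suc k)..d}" using k by auto
    then show ?thesis
      unfolding right_gram_def T_def by (simp add: msum_PiE_insert upd)
  qed
  also have "\<dots> = msum (r k) (r k)
      (\<lambda>y. Gy y * right_gram d n r G G (Suc k) * (Gy y)\<^sup>T) (T (Suc k))"
  proof (rule msum_cong)
    fix y assume y: "y \<in> T (Suc k)"
    have "msum (r k) (r k) (\<lambda>g. (Gy y * R g) * (Gy y * R g)\<^sup>T) (PiE {Suc (Suc k)..d} T)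
        = msum (r k) (r k) (\<lambda>g. Gy y * (R g * (R g)\<^sup>T) * (Gy y)\<^sup>T) (PiE {Suc (Suc k)..d} T)"
      by (rule msum_cong, rule mult_self_transpose_mult[OF C[OF y] R])
    also have "\<dots> = Gy y * right_gram d n r G G (Suc k) * (Gy y)\<^sup>T"
      unfolding gram by (rule msum_sandwich[where nr="r (Suc k)" and nc="r (Suc k)"]) (use C[OF y] RR in auto)
    finally show "msum (r k) (r k) (\<lambda>g. (Gy y * R g) * (Gy y * R g)\<^sup>T) (PiE {Suc (Suc k)..d} T)
      = Gy y * right_gram d n r G G (Suc k) * (Gy y)\<^sup>T" .
  qed
  finally show ?thesis unfolding T_def Gy_def .
qed

lemma right_gram_self_eq_one:
  assumes G: "is_tt_rep d n r G" and "k \<le> d" and "\<forall>mu\<in>{Suc k..d}. right_orth n r G mu"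
  shows "right_gram d n r G G k = 1\<^sub>m (r k)"
  using assms(2,3)
proof (induction k rule: inc_induct)
  case base
  have "r d = 1" using G by (simp add: is_tt_rep_def)
  then have "right_gram d n r G G d = msum 1 1 (\<lambda>u. 1\<^sub>m 1) {\<lambda>x::nat. undefined::nat}"
    unfolding right_gram_def by simp
  also have "\<dots> = 1\<^sub>m 1" by (rule eq_matI) auto
  finally show ?case using \<open>r d = 1\<close> by simp
next
  case (step k)
  have "right_gram d n r G G k = msum (r k) (r k)
      (\<lambda>y. G (Suc k) y * 1\<^sub>m (r (Suc k)) * (G (Suc k) y)\<^sup>T) {1..n (Suc k)}"
    using right_gram_self_step[OF G step.hyps(2)] step by simp
  also have "\<dots> = msum (r k) (r k) (\<lambda>y. G (Suc k) y * (G (Suc k) y)\<^sup>T) {1..n (Suc k)}"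
  proof (rule msum_cong)
    fix y assume "y \<in> {1..n (Suc k)}"
    then have "G (Suc k) y \<in> carrier_mat (r k) (r (Suc k))"
      using is_tt_rep_carrier[OF G, of "Suc k" y] step.hyps by simp
    then show "G (Suc k) y * 1\<^sub>m (r (Suc k)) * (G (Suc k) y)\<^sup>T = G (Suc k) y * (G (Suc k) y)\<^sup>T"
      by (simp add: right_mult_one_mat)
  qed
  also have "\<dots> = 1\<^sub>m (r k)"
  proof -
    have "right_orth n r G (Suc k)" using step.prems step.hyps by simp
    then show ?thesis unfolding right_orth_def by simp
  qed
  finally show ?case .
qed

lemma sum_fibre_split:
  fixes p q :: "(nat \<Rightarrow> nat) \<Rightarrow> real"
  assumes s: "s \<in> {1..d}" and j: "j \<in> {1..n s}"
    and p: "\<And>i i'. (\<forall>mu\<in>{1..s - 1}. i mu = i' mu) \<Longrightarrow> p i = p i'"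
    and q: "\<And>i i'. (\<forall>mu\<in>{Suc s..d}. i mu = i' mu) \<Longrightarrow> q i = q i'"
  shows "(\<Sum>i\<in>{i\<in>tt_index_set d n. i s = j}. p i * q i)
       = (\<Sum>l\<in>PiE {1..s - 1} (\<lambda>mu. {1..n mu}). p l) * (\<Sum>u\<in>PiE {Suc s..d} (\<lambda>mu. {1..n mu}). q u)"
proof -
  define T where "T = (\<lambda>mu::nat. {1..n mu})"
  define glue where "glue = (\<lambda>(l, u) m. if m \<in> {1..s - 1} then l m else if m = s then j else u m)"
  have "(\<Sum>l\<in>PiE {1..s - 1} T. p l) * (\<Sum>u\<in>PiE {Suc s..d} T. q u)
      = (\<Sum>(l, u)\<in>PiE {1..s - 1} T \<times> PiE {Suc s..d} T. p l * q u)"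
    by (simp add: sum_product sum.cartesian_product)
  also have "\<dots> = (\<Sum>i\<in>{i\<in>tt_index_set d n. i s = j}. p i * q i)"
  proof (rule sum.reindex_bij_witness[where j=glue and i="\<lambda>i. (restrict i {1..s - 1}, restrict i {Suc s..d})"])
    fix a assume "a \<in> PiE {1..s - 1} T \<times> PiE {Suc s..d} T"
    then obtain l u where a: "a = (l, u)" and l: "l \<in> PiE {1..s - 1} T" and u: "u \<in> PiE {Suc s..d} T"
      by blast
    show "(restrict (glue a) {1..s - 1}, restrict (glue a) {Suc s..d}) = a"
      using l u s unfolding a glue_def by (auto simp: PiE_iff extensional_def fun_eq_iff)
    show "glue a \<in> {i\<in>tt_index_set d n. i s = j}"
      using l u j s unfolding a glue_def tt_index_set_def T_def by (auto simp: PiE_iff extensional_def)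
    have "p (glue a) = p l" by (rule p) (simp add: a glue_def)
    moreover have "q (glue a) = q u" by (rule q) (auto simp: a glue_def)
    ultimately show "p (glue a) * q (glue a) = (case a of (l, u) \<Rightarrow> p l * q u)" by (simp add: a)
  next
    fix i assume "i \<in> {i\<in>tt_index_set d n. i s = j}"
    then have i: "i \<in> PiE {1..d} T" and "i s = j" unfolding tt_index_set_def T_def by auto
    then show "glue (restrict i {1..s - 1}, restrict i {Suc s..d}) = i"
      using s unfolding glue_def by (auto simp: PiE_iff extensional_def fun_eq_iff)
    show "(restrict i {1..s - 1}, restrict i {Suc s..d}) \<in> PiE {1..s - 1} T \<times> PiE {Suc s..d} T"
      using i s by (auto simp: PiE_iff)
  qed
  finally show ?thesis unfolding T_def ..
qed

lemma index_left_gram: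
  assumes H: "is_tt_rep d n r H" and K: "is_tt_rep d n r K" and s: "s \<in> {1..d}"
    and a: "a < r (s - 1)" "a' < r (s - 1)"
  shows "left_gram r n H K s $$ (a, a') = (\<Sum>l\<in>PiE {1..s - 1} (\<lambda>mu. {1..n mu}).
           left_prod H l (s - 1) $$ (0, a) * left_prod K l (s - 1) $$ (0, a'))"
proof -
  have "left_gram r n H K s $$ (a, a') = (\<Sum>l\<in>PiE {1..s - 1} (\<lambda>mu. {1..n mu}).
           ((left_prod H l (s - 1))\<^sup>T * left_prod K l (s - 1)) $$ (a, a'))"
    unfolding left_gram_def using a by (rule index_msum)
  also have "\<dots> = (\<Sum>l\<in>PiE {1..s - 1} (\<lambda>mu. {1..n mu}).
           left_prod H l (s - 1) $$ (0, a) * left_prod K l (s - 1) $$ (0, a'))"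
  proof (rule sum.cong[OF refl])
    fix l assume l0: "l \<in> PiE {1..s - 1} (\<lambda>mu. {1..n mu})"
    have l: "l mu \<in> {1..n mu}" if "mu \<in> {1..s - 1}" for mu
      using PiE_mem[OF l0 that] .
    have "left_prod H l (s - 1) \<in> carrier_mat 1 (r (s - 1))"
      using s l by (intro left_prod_carrier[OF H]) auto
    moreover have "left_prod K l (s - 1) \<in> carrier_mat 1 (r (s - 1))"
      using s l by (intro left_prod_carrier[OF K]) auto
    ultimately show "((left_prod H l (s - 1))\<^sup>T * left_prod K l (s - 1)) $$ (a, a')
        = left_prod H l (s - 1) $$ (0, a) * left_prod K l (s - 1) $$ (0, a')"
      using a by (rule index_transpose_mult_rows)
  qed
  finally show ?thesis .
qed

lemma index_right_gram:
  assumes H: "is_tt_rep d n r H" and K: "is_tt_rep d n r K" and s: "s \<in> {1..d}"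
    and b: "b' < r s" "b < r s"
  shows "right_gram d n r K H s $$ (b', b) = (\<Sum>u\<in>PiE {Suc s..d} (\<lambda>mu. {1..n mu}).
           right_prod K d u s $$ (b', 0) * right_prod H d u s $$ (b, 0))"
proof -
  have "right_gram d n r K H s $$ (b', b) = (\<Sum>u\<in>PiE {s + 1..d} (\<lambda>mu. {1..n mu}).
           (right_prod K d u s * (right_prod H d u s)\<^sup>T) $$ (b', b))"
    unfolding right_gram_def using b by (rule index_msum)
  also have "\<dots> = (\<Sum>u\<in>PiE {Suc s..d} (\<lambda>mu. {1..n mu}).
           right_prod K d u s $$ (b', 0) * right_prod H d u s $$ (b, 0))"
  proof (rule sum.cong)
    fix u assume u0: "u \<in> PiE {Suc s..d} (\<lambda>mu. {1..n mu})"
    have u: "u mu \<in> {1..n mu}" if "mu \<in> {Suc s..d}" for mu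
      using PiE_mem[OF u0 that] .
    have "right_prod K d u s \<in> carrier_mat (r s) 1"
      using s u by (intro right_prod_carrier[OF K]) auto
    moreover have "right_prod H d u s \<in> carrier_mat (r s) 1"
      using s u by (intro right_prod_carrier[OF H]) auto
    ultimately show "(right_prod K d u s * (right_prod H d u s)\<^sup>T) $$ (b', b)
        = right_prod K d u s $$ (b', 0) * right_prod H d u s $$ (b, 0)"
      using b by (rule index_mult_transpose_cols)
  qed simp
  finally show ?thesis .
qed

lemma fibre_sum_eq_gram_product:
  assumes H: "is_tt_rep d n r H" and K: "is_tt_rep d n r K" and s: "s \<in> {1..d}" and j: "j \<in> {1..n s}"
    and a: "a < r (s - 1)" "a' < r (s - 1)" and b: "b' < r s" "b < r s"
  shows "(\<Sum>i\<in>{i\<in>tt_index_set d n. i s = j}.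
      (left_prod H i (s - 1) $$ (0, a) * left_prod K i (s - 1) $$ (0, a'))
      * (right_prod K d i s $$ (b', 0) * right_prod H d i s $$ (b, 0)))
    = left_gram r n H K s $$ (a, a') * right_gram d n r K H s $$ (b', b)"
  unfolding index_left_gram[OF H K s a] index_right_gram[OF H K s b]
proof (rule sum_fibre_split[where s=s and d=d and n=n and j=j])
  show "s \<in> {1..d}" "j \<in> {1..n s}" using s j .
  show "left_prod H i (s - 1) $$ (0, a) * left_prod K i (s - 1) $$ (0, a')
      = left_prod H i' (s - 1) $$ (0, a) * left_prod K i' (s - 1) $$ (0, a')"
    if "\<forall>mu\<in>{1..s - 1}. i mu = i' mu" for i i'
    using that left_prod_cong[of "s - 1" H i H i'] left_prod_cong[of "s - 1" K i K i'] by simp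
  show "right_prod K d i s $$ (b', 0) * right_prod H d i s $$ (b, 0)
      = right_prod K d i' s $$ (b', 0) * right_prod H d i' s $$ (b, 0)"
    if "\<forall>mu\<in>{Suc s..d}. i mu = i' mu" for i i'
    using that s right_prod_cong[of s d K i K i'] right_prod_cong[of s d H i H i'] by simp
qed

lemma sum_comm3: "(\<Sum>x\<in>A. \<Sum>y\<in>B. \<Sum>z\<in>C. f x y z) = (\<Sum>y\<in>B. \<Sum>z\<in>C. \<Sum>x\<in>A. f x y z)"
  by (simp add: sum.swap[of _ A])

lemma eq_of_sum_sq_entry_diff_eq_0:
  fixes X Y :: "'j \<Rightarrow> real mat"
  assumes "finite J" and X: "\<forall>j\<in>J. X j \<in> carrier_mat m k" and Y: "\<forall>j\<in>J. Y j \<in> carrier_mat m k"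
    and sum0: "(\<Sum>j\<in>J. \<Sum>a<m. \<Sum>b<k. (X j $$ (a, b) - Y j $$ (a, b))\<^sup>2) = 0"
  shows "\<forall>j\<in>J. X j = Y j"
proof
  fix j assume j: "j \<in> J"
  have row0: "(\<Sum>a<m. \<Sum>b<k. (X j $$ (a, b) - Y j $$ (a, b))\<^sup>2) = 0"
    by (rule sum_nonneg_0[OF assms(1) _ sum0 j]) (intro sum_nonneg, simp)
  have entry0: "(\<Sum>b<k. (X j $$ (a, b) - Y j $$ (a, b))\<^sup>2) = 0" if "a < m" for a
    by (rule sum_nonneg_0[OF finite_lessThan _ row0]) (use that in \<open>auto intro: sum_nonneg\<close>)
  have "(X j $$ (a, b) - Y j $$ (a, b))\<^sup>2 = 0" if "a < m" "b < k" for a b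
    by (rule sum_nonneg_0[OF finite_lessThan _ entry0[OF that(1)]]) (use that in auto)
  moreover have "X j \<in> carrier_mat m k" "Y j \<in> carrier_mat m k" using X Y j by auto
  ultimately show "X j = Y j" by (intro eq_matI) auto
qed

locale tt_block =
  fixes d s :: nat and n r :: "nat \<Rightarrow> nat" and G :: "nat \<Rightarrow> nat \<Rightarrow> real mat"
  assumes block_index: "s \<in> {1..d}" and tt_rep: "is_tt_rep d n r G"
begin

text \<open>\<open>block_proj c\<close> is the adjoint of the core-to-tensor map \<open>H \<mapsto> tt_tensor d (G(s := H))\<close>
  with respect to \<open>block_inner\<close> (see \<open>sum_mult_tt_tensor_update\<close>).\<close>

definition block_proj :: "((nat \<Rightarrow> nat) \<Rightarrow> real) \<Rightarrow> nat \<Rightarrow> real mat" where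
  "block_proj c j = mat (r (s - 1)) (r s) (\<lambda>(a, b). \<Sum>i\<in>{i\<in>tt_index_set d n. i s = j}.
     c i * left_prod G i (s - 1) $$ (0, a) * right_prod G d i s $$ (b, 0))"

definition block_inner :: "(nat \<Rightarrow> real mat) \<Rightarrow> (nat \<Rightarrow> real mat) \<Rightarrow> real" where
  "block_inner X Y = (\<Sum>j\<in>{1..n s}. \<Sum>a<r (s - 1). \<Sum>b<r s. X j $$ (a, b) * Y j $$ (a, b))"

lemma block_proj_carrier [simp]: "block_proj c j \<in> carrier_mat (r (s - 1)) (r s)"
  by (simp add: block_proj_def)

lemma dim_block_proj [simp]:
  "dim_row (block_proj c j) = r (s - 1)" "dim_col (block_proj c j) = r s"
  by (simp_all add: block_proj_def)

lemma index_block_proj: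
  "a < r (s - 1) \<Longrightarrow> b < r s \<Longrightarrow> block_proj c j $$ (a, b) = (\<Sum>i\<in>{i\<in>tt_index_set d n. i s = j}.
     c i * left_prod G i (s - 1) $$ (0, a) * right_prod G d i s $$ (b, 0))"
  by (simp add: block_proj_def)

lemma block_proj_add: "block_proj (\<lambda>i. c i + c' i) j = block_proj c j + block_proj c' j"
  by (rule eq_matI) (simp_all add: index_block_proj sum.distrib algebra_simps)

lemma block_proj_diff: "block_proj (\<lambda>i. c i - c' i) j = block_proj c j - block_proj c' j"
  by (rule eq_matI) (simp_all add: index_block_proj sum_subtractf algebra_simps)

lemma block_proj_tt_tensor:
  assumes K: "is_tt_rep d n r K" and j: "j \<in> {1..n s}"
  shows "block_proj (tt_tensor d K) j = left_gram r n G K s * K s j * right_gram d n r K G s"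
proof -
  define LG where "LG = left_gram r n G K s"
  define RG where "RG = right_gram d n r K G s"
  define L where "L = (\<lambda>H i a. left_prod H i (s - 1) $$ (0, a))"
  define R where "R = (\<lambda>H i b. right_prod H d i s $$ (b, 0))"
  have LG: "LG \<in> carrier_mat (r (s - 1)) (r (s - 1))" unfolding LG_def left_gram_def by simp
  have RG: "RG \<in> carrier_mat (r s) (r s)" unfolding RG_def right_gram_def by simp
  have Kj: "K s j \<in> carrier_mat (r (s - 1)) (r s)" using is_tt_rep_carrier[OF K block_index j] .
  have "block_proj (tt_tensor d K) j = LG * K s j * RG"
  proof (rule eq_matI)
    fix a b assume "a < dim_row (LG * K s j * RG)" "b < dim_col (LG * K s j * RG)"
    then have a: "a < r (s - 1)" and b: "b < r s" using LG RG by auto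
    have "block_proj (tt_tensor d K) j $$ (a, b) = (\<Sum>i\<in>{i\<in>tt_index_set d n. i s = j}.
        \<Sum>a'<r (s - 1). \<Sum>b'<r s. K s j $$ (a', b') * ((L G i a * L K i a') * (R K i b' * R G i b)))"
    proof (unfold index_block_proj[OF a b], rule sum.cong[OF refl])
      fix i assume "i \<in> {i\<in>tt_index_set d n. i s = j}"
      then have i: "i \<in> tt_index_set d n" and "i s = j" by auto
      then show "tt_tensor d K i * left_prod G i (s - 1) $$ (0, a) * right_prod G d i s $$ (b, 0)
        = (\<Sum>a'<r (s - 1). \<Sum>b'<r s. K s j $$ (a', b') * ((L G i a * L K i a') * (R K i b' * R G i b)))"
        unfolding tt_tensor_block_expansion[OF K block_index i] L_def R_def
        by (simp add: sum_distrib_right sum_distrib_left mult_ac)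
    qed
    also have "\<dots> = (\<Sum>a'<r (s - 1). \<Sum>b'<r s. K s j $$ (a', b') *
        (\<Sum>i\<in>{i\<in>tt_index_set d n. i s = j}. (L G i a * L K i a') * (R K i b' * R G i b)))"
      by (subst sum_comm3) (simp add: sum_distrib_left)
    also have "\<dots> = (\<Sum>a'<r (s - 1). \<Sum>b'<r s. K s j $$ (a', b') * (LG $$ (a, a') * RG $$ (b', b)))"
    proof (intro sum.cong refl)
      fix a' b' assume "a' \<in> {..<r (s - 1)}" "b' \<in> {..<r s}"
      then show "K s j $$ (a', b') * (\<Sum>i\<in>{i\<in>tt_index_set d n. i s = j}. (L G i a * L K i a') * (R K i b' * R G i b))
          = K s j $$ (a', b') * (LG $$ (a, a') * RG $$ (b', b))"
        unfolding L_def R_def LG_def RG_def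
        using fibre_sum_eq_gram_product[OF tt_rep K block_index j a, of a' b' b] b by simp
    qed
    also have "\<dots> = (LG * K s j * RG) $$ (a, b)"
      by (simp add: index_mult_mat3_sum[OF LG Kj RG a b] mult_ac)
    finally show "block_proj (tt_tensor d K) j $$ (a, b) = (LG * K s j * RG) $$ (a, b)" .
  qed (use LG RG in auto)
  then show ?thesis unfolding LG_def RG_def .
qed

lemma tt_tensor_update_expansion:
  assumes H: "\<forall>j\<in>{1..n s}. H j \<in> carrier_mat (r (s - 1)) (r s)" and i: "i \<in> tt_index_set d n"
  shows "tt_tensor d (G(s := H)) i = (\<Sum>a<r (s - 1). \<Sum>b<r s.
     left_prod G i (s - 1) $$ (0, a) * H (i s) $$ (a, b) * right_prod G d i s $$ (b, 0))"
proof -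
  have "left_prod (G(s := H)) i (s - 1) = left_prod G i (s - 1)"
    by (rule left_prod_cong) (use block_index in auto)
  moreover have "right_prod (G(s := H)) d i s = right_prod G d i s"
    by (rule right_prod_cong) (use block_index in auto)
  ultimately show ?thesis
    using tt_tensor_block_expansion[OF is_tt_rep_update[OF tt_rep H] block_index i] by simp
qed

lemma sum_mult_tt_tensor_update:
  assumes H: "\<forall>j\<in>{1..n s}. H j \<in> carrier_mat (r (s - 1)) (r s)"
  shows "(\<Sum>i\<in>tt_index_set d n. c i * tt_tensor d (G(s := H)) i) = block_inner (block_proj c) H"
proof -
  have "(\<Sum>i\<in>tt_index_set d n. c i * tt_tensor d (G(s := H)) i)
      = (\<Sum>j\<in>{1..n s}. \<Sum>i\<in>{i\<in>tt_index_set d n. i s = j}. c i * tt_tensor d (G(s := H)) i)"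
    by (rule sum.group[symmetric]) (use tt_index_set_mem block_index in auto)
  also have "\<dots> = (\<Sum>j\<in>{1..n s}. \<Sum>i\<in>{i\<in>tt_index_set d n. i s = j}. \<Sum>a<r (s - 1). \<Sum>b<r s.
      H j $$ (a, b) * (c i * left_prod G i (s - 1) $$ (0, a) * right_prod G d i s $$ (b, 0)))"
    by (intro sum.cong refl) (auto simp: tt_tensor_update_expansion[OF H] sum_distrib_left mult_ac)
  also have "\<dots> = block_inner (block_proj c) H"
    unfolding block_inner_def
    by (intro sum.cong refl, subst sum_comm3) (simp add: index_block_proj sum_distrib_left mult_ac)
  finally show ?thesis .
qed

lemma block_proj_supported:
  assumes "P \<subseteq> tt_index_set d n"
  shows "block_proj (\<lambda>i. if i \<in> P then c i else 0) j = msum (r (s - 1)) (r s)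
      (\<lambda>i. c i \<cdot>\<^sub>m ((left_prod G i (s - 1))\<^sup>T * (right_prod G d i s)\<^sup>T)) {i \<in> P. i s = j}"
proof (rule eq_matI)
  fix a b assume "a < dim_row (msum (r (s - 1)) (r s)
      (\<lambda>i. c i \<cdot>\<^sub>m ((left_prod G i (s - 1))\<^sup>T * (right_prod G d i s)\<^sup>T)) {i \<in> P. i s = j})"
    "b < dim_col (msum (r (s - 1)) (r s)
      (\<lambda>i. c i \<cdot>\<^sub>m ((left_prod G i (s - 1))\<^sup>T * (right_prod G d i s)\<^sup>T)) {i \<in> P. i s = j})"
  then have a: "a < r (s - 1)" and b: "b < r s" by auto
  have "block_proj (\<lambda>i. if i \<in> P then c i else 0) j $$ (a, b) = (\<Sum>i\<in>{i\<in>tt_index_set d n. i s = j}.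
      if i \<in> P then c i * left_prod G i (s - 1) $$ (0, a) * right_prod G d i s $$ (b, 0) else 0)"
    unfolding index_block_proj[OF a b] by (intro sum.cong) auto
  also have "\<dots> = (\<Sum>i\<in>{i \<in> P. i s = j}. c i * left_prod G i (s - 1) $$ (0, a) * right_prod G d i s $$ (b, 0))"
  proof -
    have "{i\<in>{i\<in>tt_index_set d n. i s = j}. i \<in> P} = {i \<in> P. i s = j}" using assms by auto
    then show ?thesis by (simp add: sum.inter_filter[symmetric])
  qed
  also have "\<dots> = (\<Sum>i\<in>{i \<in> P. i s = j}.
      (c i \<cdot>\<^sub>m ((left_prod G i (s - 1))\<^sup>T * (right_prod G d i s)\<^sup>T)) $$ (a, b))"
  proof (rule sum.cong[OF refl])
    fix i assume "i \<in> {i \<in> P. i s = j}"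
    then have i: "i \<in> tt_index_set d n" using assms by auto
    have "left_prod G i (s - 1) \<in> carrier_mat 1 (r (s - 1))"
      using block_index tt_index_set_mem[OF i] by (intro left_prod_carrier[OF tt_rep]) auto
    moreover have "right_prod G d i s \<in> carrier_mat (r s) 1"
      using block_index tt_index_set_mem[OF i] by (intro right_prod_carrier[OF tt_rep]) auto
    ultimately show "c i * left_prod G i (s - 1) $$ (0, a) * right_prod G d i s $$ (b, 0)
        = (c i \<cdot>\<^sub>m ((left_prod G i (s - 1))\<^sup>T * (right_prod G d i s)\<^sup>T)) $$ (a, b)"
      using a b index_transpose_mult_rows[of "left_prod G i (s - 1)" "r (s - 1)" "(right_prod G d i s)\<^sup>T" "r s" a b]
      by simp
  qed
  finally show "block_proj (\<lambda>i. if i \<in> P then c i else 0) j $$ (a, b) = msum (r (s - 1)) (r s)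
      (\<lambda>i. c i \<cdot>\<^sub>m ((left_prod G i (s - 1))\<^sup>T * (right_prod G d i s)\<^sup>T)) {i \<in> P. i s = j} $$ (a, b)"
    using a b by simp
qed simp_all

end

locale tt_block_orth = tt_block +
  assumes left_orthogonal: "\<forall>mu\<in>{1..<s}. left_orth n r G mu"
    and right_orthogonal: "\<forall>mu\<in>{s<..d}. right_orth n r G mu"
begin

lemma block_proj_tt_tensor_update:
  assumes H: "\<forall>j\<in>{1..n s}. H j \<in> carrier_mat (r (s - 1)) (r s)" and j: "j \<in> {1..n s}"
  shows "block_proj (tt_tensor d (G(s := H))) j = H j"
proof -
  have "left_prod (G(s := H)) l (s - 1) = left_prod G l (s - 1)" for l
    by (rule left_prod_cong) (use block_index in auto)
  then have "left_gram r n G (G(s := H)) s = left_gram r n G G s"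
    unfolding left_gram_def by simp
  also have "\<dots> = 1\<^sub>m (r (s - 1))"
  proof -
    have "\<forall>mu\<in>{1..s - 1}. left_orth n r G mu" using left_orthogonal by auto
    then show ?thesis using left_gram_self_eq_one[OF tt_rep, of "s - 1"] block_index by auto
  qed
  finally have left: "left_gram r n G (G(s := H)) s = 1\<^sub>m (r (s - 1))" .
  have "right_prod (G(s := H)) d u s = right_prod G d u s" for u
    by (rule right_prod_cong) (use block_index in auto)
  then have "right_gram d n r (G(s := H)) G s = right_gram d n r G G s"
    unfolding right_gram_def by simp
  also have "\<dots> = 1\<^sub>m (r s)"
    using right_gram_self_eq_one[OF tt_rep, of s] block_index right_orthogonal by auto
  finally have right: "right_gram d n r (G(s := H)) G s = 1\<^sub>m (r s)" .
  have "H j \<in> carrier_mat (r (s - 1)) (r s)" using H j by blast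
  then show ?thesis
    using block_proj_tt_tensor[OF is_tt_rep_update[OF tt_rep H] j] left right
    by (simp add: left_mult_one_mat right_mult_one_mat)
qed

lemma block_proj_residual_eq_0:
  assumes Gn: "\<forall>j\<in>{1..n s}. Gn j = block_proj Y j" and j: "j \<in> {1..n s}"
  shows "block_proj (\<lambda>i. Y i - tt_tensor d (G(s := Gn)) i) j = 0\<^sub>m (r (s - 1)) (r s)"
proof -
  have "\<forall>j\<in>{1..n s}. Gn j \<in> carrier_mat (r (s - 1)) (r s)"
    using Gn block_proj_carrier by metis
  then show ?thesis
    using Gn j by (simp add: block_proj_diff block_proj_tt_tensor_update minus_r_inv_mat[OF block_proj_carrier])
qed

lemma sum_sq_residual_block_update:
  assumes Gn: "\<forall>j\<in>{1..n s}. Gn j = block_proj Y j"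
    and H: "\<forall>j\<in>{1..n s}. H j \<in> carrier_mat (r (s - 1)) (r s)"
  shows "(\<Sum>i\<in>tt_index_set d n. (Y i - tt_tensor d (G(s := H)) i)\<^sup>2)
       = (\<Sum>i\<in>tt_index_set d n. (Y i - tt_tensor d (G(s := Gn)) i)\<^sup>2)
         + (\<Sum>j\<in>{1..n s}. \<Sum>a<r (s - 1). \<Sum>b<r s. (H j $$ (a, b) - Gn j $$ (a, b))\<^sup>2)"
proof -
  define I where "I = tt_index_set d n"
  define A where "A = (\<lambda>X i. tt_tensor d (G(s := X)) i)"
  define E where "E = (\<lambda>i. Y i - A Gn i)"
  define D where "D = (\<lambda>i. A Gn i - A H i)"
  have Gn_carrier: "\<forall>j\<in>{1..n s}. Gn j \<in> carrier_mat (r (s - 1)) (r s)"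
    using Gn block_proj_carrier by metis
  have dims: "dim_row (H j) = r (s - 1)" "dim_col (H j) = r s" if "j \<in> {1..n s}" for j
    using H that by auto
  have inner: "(\<Sum>i\<in>I. c i * D i) = block_inner (block_proj c) Gn - block_inner (block_proj c) H" for c
    unfolding I_def D_def A_def
    by (simp add: right_diff_distrib sum_subtractf sum_mult_tt_tensor_update[OF Gn_carrier]
        sum_mult_tt_tensor_update[OF H])
  have "block_inner (block_proj E) X = 0" for X
    unfolding block_inner_def E_def A_def
    by (intro sum.neutral ballI) (simp add: block_proj_residual_eq_0[OF Gn])
  then have cross: "(\<Sum>i\<in>I. E i * D i) = 0"
    unfolding inner by simp
  have "block_proj D j = Gn j - H j" if "j \<in> {1..n s}" for j
    using that unfolding D_def A_def
    by (simp add: block_proj_diff block_proj_tt_tensor_update[OF Gn_carrier] block_proj_tt_tensor_update[OF H])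
  then have inner_D: "block_inner (block_proj D) X
      = (\<Sum>j\<in>{1..n s}. \<Sum>a<r (s - 1). \<Sum>b<r s. (Gn j $$ (a, b) - H j $$ (a, b)) * X j $$ (a, b))" for X
    unfolding block_inner_def by (intro sum.cong refl) (simp add: dims)
  have square: "(\<Sum>i\<in>I. D i * D i)
      = (\<Sum>j\<in>{1..n s}. \<Sum>a<r (s - 1). \<Sum>b<r s. (H j $$ (a, b) - Gn j $$ (a, b))\<^sup>2)"
    unfolding inner inner_D sum_subtractf[symmetric]
    by (intro sum.cong refl) (simp add: power2_eq_square algebra_simps)
  have "(\<Sum>i\<in>I. (Y i - A H i)\<^sup>2) = (\<Sum>i\<in>I. (E i)\<^sup>2 + 2 * (E i * D i) + D i * D i)"
    unfolding E_def D_def by (intro sum.cong refl) (simp add: power2_eq_square algebra_simps)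
  also have "\<dots> = (\<Sum>i\<in>I. (E i)\<^sup>2) + 2 * (\<Sum>i\<in>I. E i * D i) + (\<Sum>i\<in>I. D i * D i)"
    by (simp add: sum.distrib sum_distrib_left)
  finally show ?thesis
    using cross square unfolding I_def E_def A_def by simp
qed

lemma block_proj_minimizes_residual:
  assumes Gn: "\<forall>j\<in>{1..n s}. Gn j = block_proj Y j"
    and H: "\<forall>j\<in>{1..n s}. H j \<in> carrier_mat (r (s - 1)) (r s)"
  shows "frob_norm d n (\<lambda>i. Y i - tt_tensor d (G(s := Gn)) i)
      \<le> frob_norm d n (\<lambda>i. Y i - tt_tensor d (G(s := H)) i)"
    and "frob_norm d n (\<lambda>i. Y i - tt_tensor d (G(s := H)) i)
      = frob_norm d n (\<lambda>i. Y i - tt_tensor d (G(s := Gn)) i) \<Longrightarrow> \<forall>j\<in>{1..n s}. H j = Gn j"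
proof -
  define dist where
    "dist = (\<Sum>j\<in>{1..n s}. \<Sum>a<r (s - 1). \<Sum>b<r s. (H j $$ (a, b) - Gn j $$ (a, b))\<^sup>2)"
  have "dist \<ge> 0" unfolding dist_def by (intro sum_nonneg) auto
  then show "frob_norm d n (\<lambda>i. Y i - tt_tensor d (G(s := Gn)) i)
      \<le> frob_norm d n (\<lambda>i. Y i - tt_tensor d (G(s := H)) i)"
    unfolding frob_norm_def sum_sq_residual_block_update[OF Gn H] dist_def[symmetric] by simp
  assume "frob_norm d n (\<lambda>i. Y i - tt_tensor d (G(s := H)) i)
      = frob_norm d n (\<lambda>i. Y i - tt_tensor d (G(s := Gn)) i)"
  then have "dist = 0"
    unfolding frob_norm_def sum_sq_residual_block_update[OF Gn H] dist_def[symmetric]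
    by (simp add: sum_nonneg)
  then show "\<forall>j\<in>{1..n s}. H j = Gn j"
    using H Gn unfolding dist_def by (intro eq_of_sum_sq_entry_diff_eq_0) auto
qed

end

theorem theorem3p7:
  fixes d s :: nat and n r :: "nat \<Rightarrow> nat"
    and G Gm :: "nat \<Rightarrow> nat \<Rightarrow> real mat"
    and M :: "(nat \<Rightarrow> nat) \<Rightarrow> real" and P :: "(nat \<Rightarrow> nat) set" and \<alpha> :: real
    and Z Z\<alpha> :: "(nat \<Rightarrow> nat) \<Rightarrow> real" and Gnew :: "nat \<Rightarrow> real mat"
  assumes s: "s \<in> {1..d}"
    and n_pos: "\<forall>mu\<in>{1..d}. n mu \<ge> 1"
    and r_pos: "\<forall>mu\<le>d. r mu \<ge> 1"
    and G: "is_tt_rep d n r G" and Gm: "is_tt_rep d n r Gm"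
    and lo: "\<forall>mu\<in>{1..<s}. left_orth n r G mu"
    and ro: "\<forall>mu\<in>{s<..d}. right_orth n r G mu"
    and P: "P \<subseteq> tt_index_set d n"
    and Z_def: "\<forall>i. Z i = (if i \<in> P then M i else tt_tensor d Gm i)"
    and Z\<alpha>_def: "\<forall>i. Z\<alpha> i = \<alpha> * Z i + (1 - \<alpha>) * tt_tensor d Gm i"
    and Gnew_def: "\<forall>j. Gnew j =
        left_gram r n G Gm s * Gm s j * right_gram d n r Gm G s
        + msum (r (s - 1)) (r s)
            (\<lambda>i. (\<alpha> * (M i - tt_tensor d Gm i)) \<cdot>\<^sub>m
                 ((left_prod G i (s - 1))\<^sup>T * (right_prod G d i s)\<^sup>T))
            {i \<in> P. i s = j}"
  shows "(\<forall>j\<in>{1..n s}. Gnew j \<in> carrier_mat (r (s - 1)) (r s))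
    \<and> (\<forall>H. (\<forall>j\<in>{1..n s}. H j \<in> carrier_mat (r (s - 1)) (r s)) \<longrightarrow>
         frob_norm d n (\<lambda>i. Z\<alpha> i - tt_tensor d (G(s := Gnew)) i)
           \<le> frob_norm d n (\<lambda>i. Z\<alpha> i - tt_tensor d (G(s := H)) i)
         \<and> (frob_norm d n (\<lambda>i. Z\<alpha> i - tt_tensor d (G(s := H)) i)
              = frob_norm d n (\<lambda>i. Z\<alpha> i - tt_tensor d (G(s := Gnew)) i)
            \<longrightarrow> (\<forall>j\<in>{1..n s}. H j = Gnew j)))"
proof -
  interpret tt_block_orth d s n r G
    using s G lo ro by unfold_locales
  have Z\<alpha>: "Z\<alpha> = (\<lambda>i. tt_tensor d Gm i + (if i \<in> P then \<alpha> * (M i - tt_tensor d Gm i) else 0))"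
  proof
    fix i
    show "Z\<alpha> i = tt_tensor d Gm i + (if i \<in> P then \<alpha> * (M i - tt_tensor d Gm i) else 0)"
      using Z_def Z\<alpha>_def[rule_format, of i] by (cases "i \<in> P") (simp_all add: algebra_simps)
  qed
  have Gnew: "\<forall>j\<in>{1..n s}. Gnew j = block_proj Z\<alpha> j"
    unfolding Z\<alpha> block_proj_add block_proj_supported[OF P]
    using Gnew_def block_proj_tt_tensor[OF Gm] by simp
  show ?thesis
    using Gnew block_proj_minimizes_residual[OF Gnew] by auto
qed

end
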